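(* Let $j\in\mathcal J$ and let $\mathcal S_j=\mathcal Q(\mathcal F_j)$. Then $\{(\hat f_j,\hat h_j):\exists\,\hat z_j\text{ with }((\hat f_j,\hat h_j),\hat z_j)\in\mathcal S_j\}=\mathcal K(\mathcal C^{(\chi)}_j)$, the convex hull of $\{\Xi_j(\tilde b):\tilde b\in\mathcal C^{(\chi)}_j\}$.
   Context: Let $R$ be a finite ring with $q$ elements, $R^-=R\setminus\{0\}$, $\mathcal H$ an $m\times n$ matrix over $R$, $\mathcal J=\{1,\dots,m\}$. Fix $j\in\mathcal J$, let $\mathcal I_j=\{i:\mathcal H_{j,i}\ne0\}=\{i_1,\dots,i_{d_j}\}$ in a fixed order, with $d_j\ge4$. Let $\mathcal F_j$ be the $(d_j-2)\times(2d_j-3)$ matrix over $R$, acting on vectors $(b\mid\chi^j)$ with $b=(b_{i_1},\dots,b_{i_{d_j}})$ and $\chi^j=(\chi^j_1,\dots,\chi^j_{d_j-3})$, whose rows express the equations $b_{i_1}\mathcal H_{j,i_1}+b_{i_2}\mathcal H_{j,i_2}+\chi^j_1=0$; $-\chi^j_\ell+b_{i_{\ell+2}}\mathcal H_{j,i_{\ell+2}}+\chi^j_{\ell+1}=0$ for $\ell=1,\dots,d_j-4$; $-\chi^j_{d_j-3}+b_{i_{d_j-1}}\mathcal H_{j,i_{d_j-1}}+b_{i_{d_j}}\mathcal H_{j,i_{d_j}}=0$; and $\mathcal C^{(\chi)}_j$ is the code of length $2d_j-3$ consisting of all solutions. For any $r\times N$ matrix $\mathcal A$ over $R$ with rows indexed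 by $\rho$, let $\mathcal A$'s local codes be $\mathcal C_\rho=\{g\in R^{\mathrm{supp}(\mathcal A_\rho)}:\sum_{i}g_i\mathcal A_{\rho,i}=0\}$, and let $\mathcal Q(\mathcal A)$ be the set of $(F,W)$, $F=(F_i^{(\alpha)})_{i\le N,\alpha\in R^-}$ real, $W=(W_{\rho,g})_{\rho,g\in\mathcal C_\rho}$ real, with $W_{\rho,g}\ge0$, $\sum_{g\in\mathcal C_\rho}W_{\rho,g}=1$ for each $\rho$, and $F_i^{(\alpha)}=\sum_{g\in\mathcal C_\rho,g_i=\alpha}W_{\rho,g}$ for all $\rho$, $i\in\mathrm{supp}(\mathcal A_\rho)$, $\alpha\in R^-$. For $\mathcal A=\mathcal F_j$, write points of $\mathcal Q(\mathcal F_j)$ as $((\hat f_j,\hat h_j),\hat z_j)$ where $\hat f_j$ collects the $F$-coordinates for the $b$-positions and $\hat h_j$ those for the $\chi^j$-positions. Let $\xi:R\to\{0,1\}^{q-1}$ (coordinates indexed by $R^-$), $\xi(a)^{(\gamma)}=1$ iff $\gamma=a$, and $\Xi_j(b\mid\chi^j)=(\xi(b_{i_1})\mid\cdots\mid\xi(b_{i_{d_j}})\mid\xi(\chi^j_1)\mid\cdots\mid\xi(\chi^j_{d_j-3}))$. *)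

theory Defs
  imports "HOL-Analysis.Analysis"
begin

(* Vectors of length N over a ring are functions nat => 'a that vanish at indices >= N.
   An r x N matrix is a function nat => nat => 'a (row, column), entries outside the
   index ranges being irrelevant. *)

definition row_supp :: "(nat \<Rightarrow> nat \<Rightarrow> 'a::zero) \<Rightarrow> nat \<Rightarrow> nat \<Rightarrow> nat set" where
  "row_supp A N \<rho> = {i. i < N \<and> A \<rho> i \<noteq> 0}"

definition local_code :: "(nat \<Rightarrow> nat \<Rightarrow> 'a::ring) \<Rightarrow> nat \<Rightarrow> nat \<Rightarrow> (nat \<Rightarrow> 'a) set" where
  "local_code A N \<rho> = {g. (\<forall>i. i \<notin> row_supp A N \<rho> \<longrightarrow> g i = 0) \<and>
                          (\<Sum>i\<in>row_supp A N \<rho>. g i * A \<rho> i) = 0}"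

(* the polytope Q(A); F i alpha for i < N, alpha \<noteq> 0; W rho g for rho < r, g in C_rho;
   all other coordinates are fixed to 0 (they do not exist in the paper) *)
definition Qpoly :: "(nat \<Rightarrow> nat \<Rightarrow> 'a::ring) \<Rightarrow> nat \<Rightarrow> nat \<Rightarrow>
     ((nat \<Rightarrow> 'a \<Rightarrow> real) \<times> (nat \<Rightarrow> (nat \<Rightarrow> 'a) \<Rightarrow> real)) set" where
  "Qpoly A r N = {(F, W).
     (\<forall>i \<alpha>. (N \<le> i \<or> \<alpha> = 0) \<longrightarrow> F i \<alpha> = 0) \<and>
     (\<forall>\<rho> g. (r \<le> \<rho> \<or> g \<notin> local_code A N \<rho>) \<longrightarrow> W \<rho> g = 0) \<and>
     (\<forall>\<rho> < r. (\<forall>g \<in> local_code A N \<rho>. W \<rho> g \<ge> 0) \<and>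
               (\<Sum>g\<in>local_code A N \<rho>. W \<rho> g) = 1 \<and>
               (\<forall>i \<in> row_supp A N \<rho>. \<forall>\<alpha>. \<alpha> \<noteq> 0 \<longrightarrow>
                   F i \<alpha> = (\<Sum>g\<in>{g \<in> local_code A N \<rho>. g i = \<alpha>}. W \<rho> g)))}"

definition kernel_code :: "(nat \<Rightarrow> nat \<Rightarrow> 'a::ring) \<Rightarrow> nat \<Rightarrow> nat \<Rightarrow> (nat \<Rightarrow> 'a) set" where
  "kernel_code A r N = {v. (\<forall>i. N \<le> i \<longrightarrow> v i = 0) \<and>
                          (\<forall>\<rho> < r. (\<Sum>i<N. v i * A \<rho> i) = 0)}"

(* The matrix F_j ((d-2) x (2d-3)).  idx k (k < d) is i_{k+1}; column k (k<d) is the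
   b-position b_{i_{k+1}}, column d+l-1 (1 <= l <= d-3) is chi^j_l. Row 0 is the first
   equation, row l (1<=l<=d-4) the l-th middle equation, row d-3 the last equation. *)
definition Fmat :: "(nat \<Rightarrow> nat \<Rightarrow> 'a::ring_1) \<Rightarrow> nat \<Rightarrow> (nat \<Rightarrow> nat) \<Rightarrow> nat \<Rightarrow> nat \<Rightarrow> nat \<Rightarrow> 'a" where
  "Fmat H j idx d \<rho> c =
     (if \<rho> = 0 then
        (if c = 0 then H j (idx 0) else if c = 1 then H j (idx 1) else if c = d then 1 else 0)
      else if \<rho> < d - 3 then
        (if c = d + \<rho> - 1 then -1 else if c = \<rho> + 1 then H j (idx (\<rho> + 1))
         else if c = d + \<rho> then 1 else 0)
      else if \<rho> = d - 3 then
        (if c = 2 * d - 4 then -1 else if c = d - 2 then H j (idx (d - 2))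
         else if c = d - 1 then H j (idx (d - 1)) else 0)
      else 0)"

(* xi : R -> {0,1}^{q-1}, coordinates indexed by R^- (value 0 at the nonexistent coordinate 0) *)
definition xi :: "'a::zero \<Rightarrow> 'a \<Rightarrow> real" where
  "xi a \<gamma> = (if \<gamma> \<noteq> 0 \<and> \<gamma> = a then 1 else 0)"

definition Xi :: "nat \<Rightarrow> (nat \<Rightarrow> 'a::zero) \<Rightarrow> nat \<Rightarrow> 'a \<Rightarrow> real" where
  "Xi N v i \<gamma> = (if i < N then xi (v i) \<gamma> else 0)"

definition fconvex :: "('b \<Rightarrow> 'c \<Rightarrow> real) set \<Rightarrow> bool" where
  "fconvex C \<longleftrightarrow> (\<forall>x\<in>C. \<forall>y\<in>C. \<forall>u::real. 0 \<le> u \<and> u \<le> 1 \<longrightarrow>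
                     (\<lambda>i a. u * x i a + (1 - u) * y i a) \<in> C)"

definition fconvex_hull :: "('b \<Rightarrow> 'c \<Rightarrow> real) set \<Rightarrow> ('b \<Rightarrow> 'c \<Rightarrow> real) set" where
  "fconvex_hull S = \<Inter>{C. S \<subseteq> C \<and> fconvex C}"

end

theory Submission
  imports Defs "HOL-Probability.Probability_Mass_Function"
begin

(* The rows of F_j form a path: row k shares with the earlier rows only the state variable
   chi_k, which it shares with row k - 1.  A point (F, W) of Q(F_j) gives for every row a
   probability distribution W_rho on its local code, and the constraints of Q say that the
   distributions of two rows have the same marginal on a common coordinate.  Gluing them row by
   row, drawing each new row conditionally on the value of the coordinate it shares with its
   predecessor, yields one distribution on the kernel code whose coordinate marginals are F.
   Thus F is the barycentre of the points Xi(b) of the code.  Conversely Q is convex and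
   contains every Xi(b). *)

lemma finite_funs_zero_outside:
  assumes "finite A"
  shows "finite {g :: 'b \<Rightarrow> 'a::{zero,finite}. \<forall>i. i \<notin> A \<longrightarrow> g i = 0}"
  using finite_set_of_finite_funs[OF assms, where B = "UNIV :: 'a set" and d = 0] by simp

lemma finite_local_code:
  fixes A :: "nat \<Rightarrow> nat \<Rightarrow> 'a::{ring,finite}"
  shows "finite (local_code A N \<rho>)"
  by (rule finite_subset[OF _ finite_funs_zero_outside[of "row_supp A N \<rho>"]])
     (auto simp: local_code_def row_supp_def)

lemma finite_kernel_code:
  fixes A :: "nat \<Rightarrow> nat \<Rightarrow> 'a::{ring,finite}"
  shows "finite (kernel_code A r N)"
  by (rule finite_subset[OF _ finite_funs_zero_outside[of "{..<N}"]])
     (auto simp: kernel_code_def)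

definition zero_outside :: "'b set \<Rightarrow> ('b \<Rightarrow> 'a::zero) \<Rightarrow> 'b \<Rightarrow> 'a" where
  "zero_outside S v = (\<lambda>i. if i \<in> S then v i else 0)"

lemma zero_outside_in_local_code_iff:
  fixes A :: "nat \<Rightarrow> nat \<Rightarrow> 'a::ring"
  shows "zero_outside (row_supp A N \<rho>) v \<in> local_code A N \<rho> \<longleftrightarrow> (\<Sum>i<N. v i * A \<rho> i) = 0"
proof -
  have "(\<Sum>i\<in>row_supp A N \<rho>. zero_outside (row_supp A N \<rho>) v i * A \<rho> i)
      = (\<Sum>i\<in>row_supp A N \<rho>. v i * A \<rho> i)"
    by (rule sum.cong) (auto simp: zero_outside_def)
  also have "\<dots> = (\<Sum>i<N. v i * A \<rho> i)"
    by (rule sum.mono_neutral_left) (auto simp: row_supp_def)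
  finally show ?thesis
    unfolding local_code_def by (auto simp: zero_outside_def)
qed

subsection \<open>Convex hulls\<close>

lemma fconvex_convex_sum:
  assumes C: "fconvex C" and "finite S" "S \<noteq> {}"
    and "\<forall>x\<in>S. 0 \<le> u x" "sum u S = 1" "\<forall>x\<in>S. f x \<in> C"
  shows "(\<lambda>i a. \<Sum>x\<in>S. u x * f x i a) \<in> C"
  using assms(2-)
proof (induction S arbitrary: u rule: finite_ne_induct)
  case (singleton x)
  then show ?case by simp
next
  case (insert x F)
  have sF: "sum u F = 1 - u x" and nn: "\<forall>y\<in>F. 0 \<le> u y"
    using insert.prems(1,2) insert.hyps by auto
  show ?case
  proof (cases "u x = 1")
    case True
    then have "\<forall>y\<in>F. u y = 0"
      using sF nn sum_nonneg_eq_0_iff[OF insert.hyps(1)] by auto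
    then have "(\<lambda>i a. \<Sum>y\<in>insert x F. u y * f y i a) = f x"
      using insert.hyps True by (simp add: fun_eq_iff)
    then show ?thesis using insert.prems(3) by simp
  next
    case False
    define t where "t = 1 - u x"
    have "0 < t" using False sF sum_nonneg[of F u] nn t_def by simp
    have G: "(\<lambda>i a. \<Sum>y\<in>F. u y / t * f y i a) \<in> C"
      using insert.IH[of "\<lambda>y. u y / t"] insert.prems(3) nn sF \<open>0 < t\<close> t_def
      by (simp add: sum_divide_distrib[symmetric])
    have "0 \<le> u x" "u x \<le> 1" using insert.prems(1) \<open>0 < t\<close> t_def by auto
    then have "(\<lambda>i a. u x * f x i a + (1 - u x) * (\<Sum>y\<in>F. u y / t * f y i a)) \<in> C"
      using C[unfolded fconvex_def, rule_format, OF _ G, of "f x" "u x"] insert.prems(3) by simp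
    moreover have "(\<lambda>i a. u x * f x i a + (1 - u x) * (\<Sum>y\<in>F. u y / t * f y i a))
        = (\<lambda>i a. \<Sum>y\<in>insert x F. u y * f y i a)"
      using insert.hyps \<open>0 < t\<close> unfolding t_def[symmetric]
      by (simp add: fun_eq_iff sum_distrib_left)
    ultimately show ?thesis by simp
  qed
qed

lemma pmf_barycentre_in_fconvex_hull:
  assumes "finite (set_pmf P)" "f ` set_pmf P \<subseteq> S"
  shows "(\<lambda>i a. \<Sum>v\<in>set_pmf P. pmf P v * f v i a) \<in> fconvex_hull S"
  unfolding fconvex_hull_def
proof (intro InterI, safe)
  fix C assume "S \<subseteq> C" "fconvex C"
  then show "(\<lambda>i a. \<Sum>v\<in>set_pmf P. pmf P v * f v i a) \<in> C"
    using assms fconvex_convex_sum[OF \<open>fconvex C\<close> assms(1) set_pmf_not_empty, of "pmf P" f]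
    by (auto simp: sum_pmf_eq_1)
qed

lemma fconvex_Qpoly_projection: "fconvex {F. \<exists>W. (F, W) \<in> Qpoly A r N}"
  unfolding fconvex_def
proof safe
  fix F1 W1 F2 W2 and u :: real
  assume Q: "(F1, W1) \<in> Qpoly A r N" "(F2, W2) \<in> Qpoly A r N" and u: "0 \<le> u" "u \<le> 1"
  have sum_mix: "(\<Sum>g\<in>X. u * W1 \<rho> g + (1 - u) * W2 \<rho> g)
      = u * sum (W1 \<rho>) X + (1 - u) * sum (W2 \<rho>) X" for X \<rho>
    by (simp add: sum.distrib sum_distrib_left)
  have "(\<lambda>i a. u * F1 i a + (1 - u) * F2 i a, \<lambda>\<rho> g. u * W1 \<rho> g + (1 - u) * W2 \<rho> g)
      \<in> Qpoly A r N"
    using Q u unfolding Qpoly_def mem_Collect_eq case_prod_conv sum_mix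
    by (auto intro!: add_nonneg_nonneg mult_nonneg_nonneg)
  then show "\<exists>W. ((\<lambda>i a. u * F1 i a + (1 - u) * F2 i a), W) \<in> Qpoly A r N" by blast
qed

lemma Xi_kernel_code_in_Qpoly:
  fixes A :: "nat \<Rightarrow> nat \<Rightarrow> 'a::{ring,finite}"
  assumes v: "v \<in> kernel_code A r N"
  shows "(Xi N v, \<lambda>\<rho> g. if \<rho> < r \<and> g = zero_outside (row_supp A N \<rho>) v then 1 else 0)
      \<in> Qpoly A r N"
proof -
  have loc: "zero_outside (row_supp A N \<rho>) v \<in> local_code A N \<rho>" if "\<rho> < r" for \<rho>
    using v that by (simp add: zero_outside_in_local_code_iff kernel_code_def)
  have marg: "Xi N v i \<alpha> = (if zero_outside (row_supp A N \<rho>) v \<in> {g \<in> local_code A N \<rho>. g i = \<alpha>}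
      then 1 else 0)" if "\<rho> < r" "i \<in> row_supp A N \<rho>" "\<alpha> \<noteq> 0" for \<rho> i \<alpha>
    using loc[OF that(1)] that by (auto simp: zero_outside_def Xi_def xi_def row_supp_def)
  show ?thesis
    unfolding Qpoly_def mem_Collect_eq case_prod_conv
    using loc marg finite_local_code[of A N]
    by (auto simp: Xi_def xi_def sum.delta' simp del: mem_Collect_eq)
qed

lemma fconvex_hull_Xi_subset_Qpoly_projection:
  fixes A :: "nat \<Rightarrow> nat \<Rightarrow> 'a::{ring,finite}"
  shows "fconvex_hull (Xi N ` kernel_code A r N) \<subseteq> {F. \<exists>W. (F, W) \<in> Qpoly A r N}"
  unfolding fconvex_hull_def
  using Xi_kernel_code_in_Qpoly[of _ A r N] fconvex_Qpoly_projection[of A r N]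
  by (intro Inter_lower) blast

subsection \<open>Gluing distributions along shared coordinates\<close>

lemma pmf_map_eq_sum_set_pmf:
  assumes "finite (set_pmf P)"
  shows "pmf (map_pmf f P) a = (\<Sum>v\<in>set_pmf P. if f v = a then pmf P v else 0)"
proof -
  have "pmf (map_pmf f P) a = measure_pmf.prob P (f -` {a} \<inter> set_pmf P)"
    by (simp add: pmf_map measure_Int_set_pmf)
  also have "\<dots> = (\<Sum>v\<in>{v \<in> set_pmf P. f v = a}. pmf P v)"
    using assms by (subst measure_measure_pmf_finite) (auto intro!: sum.cong)
  also have "\<dots> = (\<Sum>v\<in>set_pmf P. if f v = a then pmf P v else 0)"
    using assms by (rule sum.inter_filter)
  finally show ?thesis .
qed

lemma pmf_eqI_nonzero:
  fixes p q :: "'a::{zero,finite} pmf"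
  assumes "\<And>a. a \<noteq> 0 \<Longrightarrow> pmf p a = pmf q a"
  shows "p = q"
proof (rule pmf_eqI)
  have pmf_zero: "pmf p 0 = 1 - (\<Sum>a\<in>UNIV - {0}. pmf p a)" for p :: "'a pmf"
    using sum.remove[of UNIV 0 "pmf p"] sum_pmf_eq_1[of UNIV p] by simp
  fix a show "pmf p a = pmf q a"
  proof (cases "a = 0")
    case True
    have "(\<Sum>a\<in>UNIV - {0}. pmf p a) = (\<Sum>a\<in>UNIV - {0}. pmf q a)"
      using assms by (intro sum.cong) auto
    then show ?thesis using True pmf_zero[of p] pmf_zero[of q] by simp
  qed (use assms in auto)
qed

lemma bind_cond_pmf_coordinate:
  "bind_pmf (map_pmf (\<lambda>g. g c) Q) (\<lambda>a. cond_pmf Q {g. g c = a}) = Q"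
  using bind_cond_pmf_cancel[of "map_pmf (\<lambda>g. g c) Q" Q "\<lambda>a g. g c = a"]
  by (auto simp: vimage_def eq_commute)

lemma glue_pmf_at_coordinate:
  fixes P Q :: "('b \<Rightarrow> 'a::zero) pmf"
  assumes Q_supp: "\<And>g i. g \<in> set_pmf Q \<Longrightarrow> i \<notin> S \<Longrightarrow> g i = 0"
    and marg: "map_pmf (\<lambda>v. v c) P = map_pmf (\<lambda>g. g c) Q"
  obtains P' where "map_pmf (zero_outside S) P' = Q"
    and "\<And>T. T \<inter> S \<subseteq> {c} \<Longrightarrow> map_pmf (zero_outside T) P' = map_pmf (zero_outside T) P"
    and "\<And>v. v \<in> set_pmf P' \<Longrightarrow> \<exists>u\<in>set_pmf P. \<forall>i. i \<notin> S \<longrightarrow> v i = u i"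
proof -
  let ?cond = "\<lambda>v. cond_pmf Q {g. g c = v c}"
  define P' where "P' = bind_pmf P (\<lambda>v. map_pmf (\<lambda>w. override_on v w S) (?cond v))"
  have "set_pmf Q \<inter> {g. g c = v c} \<noteq> {}" if "v \<in> set_pmf P" for v
  proof -
    have "v c \<in> set_pmf (map_pmf (\<lambda>g. g c) Q)"
      using that marg[symmetric] by (metis pmf.set_map imageI)
    then show ?thesis by auto
  qed
  then have set_cond: "set_pmf (?cond v) = set_pmf Q \<inter> {g. g c = v c}" if "v \<in> set_pmf P" for v
    using that by (intro set_cond_pmf)
  have "map_pmf (zero_outside S) P' = bind_pmf P ?cond"
    unfolding P'_def map_bind_pmf pmf.map_comp
  proof (intro bind_pmf_cong refl)
    fix v assume "v \<in> set_pmf P"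
    then have "map_pmf (zero_outside S \<circ> (\<lambda>w. override_on v w S)) (?cond v) = map_pmf id (?cond v)"
      using set_cond Q_supp by (intro map_pmf_cong) (auto simp: zero_outside_def fun_eq_iff)
    then show "map_pmf (zero_outside S \<circ> (\<lambda>w. override_on v w S)) (?cond v) = ?cond v" by simp
  qed
  also have "\<dots> = Q"
    using bind_cond_pmf_coordinate[of c Q] by (simp add: marg[symmetric] bind_map_pmf)
  finally have "map_pmf (zero_outside S) P' = Q" .
  moreover have "map_pmf (zero_outside T) P' = map_pmf (zero_outside T) P"
    if T: "T \<inter> S \<subseteq> {c}" for T
  proof -
    have "map_pmf (zero_outside T) P' = bind_pmf P (\<lambda>v. return_pmf (zero_outside T v))"
      unfolding P'_def map_bind_pmf pmf.map_comp
    proof (intro bind_pmf_cong refl)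
      fix v assume "v \<in> set_pmf P"
      then have "map_pmf (zero_outside T \<circ> (\<lambda>w. override_on v w S)) (?cond v)
          = map_pmf (\<lambda>_. zero_outside T v) (?cond v)"
        using set_cond T
        by (intro map_pmf_cong) (auto simp: zero_outside_def fun_eq_iff override_on_def)
      then show "map_pmf (zero_outside T \<circ> (\<lambda>w. override_on v w S)) (?cond v)
          = return_pmf (zero_outside T v)" by simp
    qed
    then show ?thesis by (simp add: map_pmf_def)
  qed
  moreover have "\<exists>u\<in>set_pmf P. \<forall>i. i \<notin> S \<longrightarrow> v i = u i" if "v \<in> set_pmf P'" for v
    using that by (auto simp: P'_def)
  ultimately show ?thesis by (rule that)
qed

text \<open>Rows \<open>0, \<dots>, r - 1\<close> with supports \<open>S\<close> whose Tanner graph is a path: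
  the coordinate \<open>s k\<close> joins row \<open>k - 1\<close> to row \<open>k\<close>, and it is the only
  coordinate row \<open>k\<close> has in common with earlier rows.\<close>

definition path_shaped :: "(nat \<Rightarrow> 'b set) \<Rightarrow> nat \<Rightarrow> (nat \<Rightarrow> 'b) \<Rightarrow> bool" where
  "path_shaped S r s \<longleftrightarrow> (\<forall>k. 0 < k \<and> k < r \<longrightarrow> s k \<in> S (k - 1) \<inter> S k) \<and>
     (\<forall>\<rho> k. \<rho> < k \<and> k < r \<longrightarrow> S \<rho> \<inter> S k \<subseteq> {s k})"

lemma glue_pmf_chain:
  fixes Q :: "nat \<Rightarrow> ('b \<Rightarrow> 'a::zero) pmf"
  assumes "0 < r" "path_shaped S r s"
    and "\<And>\<rho> g i. \<rho> < r \<Longrightarrow> g \<in> set_pmf (Q \<rho>) \<Longrightarrow> i \<notin> S \<rho> \<Longrightarrow> g i = 0"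
    and "\<And>k. 0 < k \<Longrightarrow> k < r \<Longrightarrow>
           map_pmf (\<lambda>g. g (s k)) (Q (k - 1)) = map_pmf (\<lambda>g. g (s k)) (Q k)"
  shows "\<exists>P. (\<forall>\<rho><r. map_pmf (zero_outside (S \<rho>)) P = Q \<rho>) \<and>
             (\<forall>v\<in>set_pmf P. \<forall>i. (\<forall>\<rho><r. i \<notin> S \<rho>) \<longrightarrow> v i = 0)"
  using assms
proof (induction r rule: nat_induct_non_zero)
  case 1
  have "map_pmf (zero_outside (S 0)) (Q 0) = map_pmf id (Q 0)"
    using "1.prems"(2) by (intro map_pmf_cong) (auto simp: zero_outside_def fun_eq_iff)
  then show ?case using "1.prems"(2) by (intro exI[of _ "Q 0"]) auto
next
  case (Suc n)
  have "path_shaped S n s" using Suc.prems(1) by (auto simp: path_shaped_def)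
  with Suc.IH Suc.prems obtain P where P_rows: "\<forall>\<rho><n. map_pmf (zero_outside (S \<rho>)) P = Q \<rho>"
    and P_supp: "\<forall>v\<in>set_pmf P. \<forall>i. (\<forall>\<rho><n. i \<notin> S \<rho>) \<longrightarrow> v i = 0"
    by (metis less_SucI)
  have s_n: "s n \<in> S (n - 1)" "\<And>\<rho>. \<rho> < n \<Longrightarrow> S \<rho> \<inter> S n \<subseteq> {s n}"
    using Suc.prems(1) \<open>0 < n\<close> by (auto simp: path_shaped_def)
  have "map_pmf (\<lambda>v. v (s n)) P = map_pmf (\<lambda>g. g (s n)) (map_pmf (zero_outside (S (n - 1))) P)"
    using s_n(1) by (simp add: pmf.map_comp o_def zero_outside_def)
  also have "\<dots> = map_pmf (\<lambda>g. g (s n)) (Q n)"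
    using P_rows Suc.prems(3) \<open>0 < n\<close> by simp
  finally obtain P' where P'_new: "map_pmf (zero_outside (S n)) P' = Q n"
    and P'_old: "\<And>T. T \<inter> S n \<subseteq> {s n} \<Longrightarrow> map_pmf (zero_outside T) P' = map_pmf (zero_outside T) P"
    and P'_set: "\<And>v. v \<in> set_pmf P' \<Longrightarrow> \<exists>u\<in>set_pmf P. \<forall>i. i \<notin> S n \<longrightarrow> v i = u i"
    using glue_pmf_at_coordinate[of "Q n" "S n"] Suc.prems(2) by blast
  have "map_pmf (zero_outside (S \<rho>)) P' = Q \<rho>" if "\<rho> < Suc n" for \<rho>
    using that P'_new P'_old[OF s_n(2)] P_rows by (cases "\<rho> = n") auto
  moreover have "v i = 0" if "v \<in> set_pmf P'" "\<forall>\<rho><Suc n. i \<notin> S \<rho>" for v i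
    using P'_set[OF that(1)] P_supp that(2) by auto
  ultimately show ?case by blast
qed

subsection \<open>The projection of Q is the convex hull of the code\<close>

lemma Qpoly_row_embed_pmf:
  fixes A :: "nat \<Rightarrow> nat \<Rightarrow> 'a::{ring,finite}" and F :: "nat \<Rightarrow> 'a \<Rightarrow> real"
  assumes FW: "(F, W) \<in> Qpoly A r N" and "\<rho> < r"
  shows "set_pmf (embed_pmf (W \<rho>)) \<subseteq> local_code A N \<rho>"
    and "\<And>c \<alpha>. c \<in> row_supp A N \<rho> \<Longrightarrow> \<alpha> \<noteq> 0 \<Longrightarrow>
           pmf (map_pmf (\<lambda>g. g c) (embed_pmf (W \<rho>))) \<alpha> = F c \<alpha>"
proof -
  note Q = FW[unfolded Qpoly_def mem_Collect_eq case_prod_conv]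
  have W_out: "W \<rho> g = 0" if "g \<notin> local_code A N \<rho>" for g
    using conjunct1[OF conjunct2[OF Q]] that by blast
  note row = conjunct2[OF conjunct2[OF Q], rule_format, OF \<open>\<rho> < r\<close>]
  have W_nonneg: "0 \<le> W \<rho> g" for g
    using conjunct1[OF row] W_out by (cases "g \<in> local_code A N \<rho>") auto
  have W_sum: "sum (W \<rho>) (local_code A N \<rho>) = 1"
    using conjunct1[OF conjunct2[OF row]] .
  have "(\<integral>\<^sup>+g. ennreal (W \<rho> g) \<partial>count_space UNIV) = (\<Sum>g\<in>local_code A N \<rho>. ennreal (W \<rho> g))"
    using finite_local_code W_out by (intro nn_integral_count_space') auto
  also have "\<dots> = 1"
    using W_sum W_nonneg by (subst sum_ennreal) auto
  finally have "pmf (embed_pmf (W \<rho>)) g = W \<rho> g" for g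
    using W_nonneg by (intro pmf_embed_pmf)
  moreover define P where "P = embed_pmf (W \<rho>)"
  ultimately have pmf_P: "pmf P g = W \<rho> g" for g
    by simp
  show set_P: "set_pmf (embed_pmf (W \<rho>)) \<subseteq> local_code A N \<rho>"
    unfolding P_def[symmetric]
  proof
    fix g assume "g \<in> set_pmf P"
    then have "W \<rho> g \<noteq> 0" by (simp add: set_pmf_iff pmf_P)
    then show "g \<in> local_code A N \<rho>" using W_out by blast
  qed
  fix c and \<alpha> :: 'a assume "c \<in> row_supp A N \<rho>" "\<alpha> \<noteq> 0"
  have "pmf (map_pmf (\<lambda>g. g c) P) \<alpha> = (\<Sum>g\<in>set_pmf P. if g c = \<alpha> then W \<rho> g else 0)"
    unfolding pmf_P[symmetric]
    using finite_subset[OF set_P[folded P_def] finite_local_code] by (rule pmf_map_eq_sum_set_pmf)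
  also have "\<dots> = (\<Sum>g\<in>local_code A N \<rho>. if g c = \<alpha> then W \<rho> g else 0)"
    using set_P[folded P_def] finite_local_code
    by (intro sum.mono_neutral_left) (auto simp: set_pmf_iff pmf_P)
  also have "\<dots> = (\<Sum>g\<in>{g \<in> local_code A N \<rho>. g c = \<alpha>}. W \<rho> g)"
    using finite_local_code by (rule sum.inter_filter[symmetric])
  also have "\<dots> = F c \<alpha>"
    using conjunct2[OF conjunct2[OF row]] \<open>c \<in> row_supp A N \<rho>\<close> \<open>\<alpha> \<noteq> 0\<close> by simp
  finally show "pmf (map_pmf (\<lambda>g. g c) (embed_pmf (W \<rho>))) \<alpha> = F c \<alpha>"
    unfolding P_def .
qed

lemma Qpoly_glued_pmf:
  fixes A :: "nat \<Rightarrow> nat \<Rightarrow> 'a::{ring,finite}"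
  assumes "0 < r" and path: "path_shaped (row_supp A N) r s"
    and FW: "(F, W) \<in> Qpoly A r N"
  obtains P where "set_pmf P \<subseteq> kernel_code A r N"
    and "\<And>\<rho>. \<rho> < r \<Longrightarrow> map_pmf (zero_outside (row_supp A N \<rho>)) P = embed_pmf (W \<rho>)"
proof -
  let ?Q = "\<lambda>\<rho>. embed_pmf (W \<rho>)"
  note set_Q = Qpoly_row_embed_pmf(1)[OF FW] and marg_Q = Qpoly_row_embed_pmf(2)[OF FW]
  have Q_marg: "map_pmf (\<lambda>g. g (s k)) (?Q (k - 1)) = map_pmf (\<lambda>g. g (s k)) (?Q k)"
    if "0 < k" "k < r" for k
  proof (rule pmf_eqI_nonzero)
    have "s k \<in> row_supp A N (k - 1)" "s k \<in> row_supp A N k"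
      using path that by (auto simp: path_shaped_def)
    then show "pmf (map_pmf (\<lambda>g. g (s k)) (?Q (k - 1))) \<alpha> = pmf (map_pmf (\<lambda>g. g (s k)) (?Q k)) \<alpha>"
      if "\<alpha> \<noteq> 0" for \<alpha>
      using marg_Q \<open>0 < k\<close> \<open>k < r\<close> \<open>\<alpha> \<noteq> 0\<close> by simp
  qed
  have Q_supp: "g i = 0" if "\<rho> < r" "g \<in> set_pmf (?Q \<rho>)" "i \<notin> row_supp A N \<rho>" for \<rho> g i
    using set_Q[OF that(1)] that(2,3) by (auto simp: local_code_def)
  have "\<exists>P. (\<forall>\<rho><r. map_pmf (zero_outside (row_supp A N \<rho>)) P = ?Q \<rho>) \<and>
      (\<forall>v\<in>set_pmf P. \<forall>i. (\<forall>\<rho><r. i \<notin> row_supp A N \<rho>) \<longrightarrow> v i = 0)"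
    using \<open>0 < r\<close> path Q_supp Q_marg by (rule glue_pmf_chain)
  then obtain P where P_rows: "\<forall>\<rho><r. map_pmf (zero_outside (row_supp A N \<rho>)) P = ?Q \<rho>"
    and P_supp: "\<forall>v\<in>set_pmf P. \<forall>i. (\<forall>\<rho><r. i \<notin> row_supp A N \<rho>) \<longrightarrow> v i = 0"
    by (elim exE conjE) (rule that)
  have "set_pmf P \<subseteq> kernel_code A r N"
  proof
    fix v assume v: "v \<in> set_pmf P"
    have "zero_outside (row_supp A N \<rho>) v \<in> local_code A N \<rho>" if "\<rho> < r" for \<rho>
    proof -
      have "zero_outside (row_supp A N \<rho>) v \<in> set_pmf (?Q \<rho>)"
        using v P_rows that by (metis pmf.set_map imageI)
      then show ?thesis using set_Q[OF that] by blast
    qed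
    moreover have "v i = 0" if "N \<le> i" for i
      using P_supp v that by (auto simp: row_supp_def)
    ultimately show "v \<in> kernel_code A r N"
      by (auto simp: kernel_code_def zero_outside_in_local_code_iff)
  qed
  with P_rows show ?thesis
    using that by blast
qed

lemma Qpoly_projection_subset_fconvex_hull:
  fixes A :: "nat \<Rightarrow> nat \<Rightarrow> 'a::{ring,finite}"
  assumes "0 < r" "path_shaped (row_supp A N) r s"
    and cover: "\<And>c. c < N \<Longrightarrow> \<exists>\<rho><r. c \<in> row_supp A N \<rho>"
    and FW: "(F, W) \<in> Qpoly A r N"
  shows "F \<in> fconvex_hull (Xi N ` kernel_code A r N)"
proof -
  obtain P where set_P: "set_pmf P \<subseteq> kernel_code A r N"
    and P_rows: "\<And>\<rho>. \<rho> < r \<Longrightarrow> map_pmf (zero_outside (row_supp A N \<rho>)) P = embed_pmf (W \<rho>)"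
    using Qpoly_glued_pmf[OF assms(1,2) FW] by blast
  have fin: "finite (set_pmf P)"
    using finite_subset[OF set_P finite_kernel_code] .
  have F_out: "F i a = 0" if "N \<le> i \<or> a = 0" for i a
    using conjunct1[OF FW[unfolded Qpoly_def mem_Collect_eq case_prod_conv]] that by blast
  have "F = (\<lambda>i a. \<Sum>v\<in>set_pmf P. pmf P v * Xi N v i a)"
  proof (intro ext)
    fix i a
    show "F i a = (\<Sum>v\<in>set_pmf P. pmf P v * Xi N v i a)"
    proof (cases "i < N \<and> a \<noteq> 0")
      case True
      then obtain \<rho> where \<rho>: "\<rho> < r" "i \<in> row_supp A N \<rho>"
        using cover by blast
      then have "F i a = pmf (map_pmf (\<lambda>g. g i) (map_pmf (zero_outside (row_supp A N \<rho>)) P)) a"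
        using Qpoly_row_embed_pmf(2)[OF FW] P_rows True by simp
      also have "\<dots> = pmf (map_pmf (\<lambda>v. v i) P) a"
        using \<rho>(2) by (simp add: pmf.map_comp o_def zero_outside_def)
      also have "\<dots> = (\<Sum>v\<in>set_pmf P. if v i = a then pmf P v else 0)"
        using fin by (rule pmf_map_eq_sum_set_pmf)
      also have "\<dots> = (\<Sum>v\<in>set_pmf P. pmf P v * Xi N v i a)"
        using True by (intro sum.cong) (auto simp: Xi_def xi_def)
      finally show ?thesis .
    next
      case False
      then have "F i a = 0" "\<And>v. Xi N v i a = 0"
        using F_out by (auto simp: Xi_def xi_def)
      then show ?thesis by simp
    qed
  qed
  then show ?thesis
    using pmf_barycentre_in_fconvex_hull[OF fin image_mono[OF set_P]] by simp
qed

theorem Qpoly_projection_eq_fconvex_hull: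
  fixes A :: "nat \<Rightarrow> nat \<Rightarrow> 'a::{ring,finite}"
  assumes "0 < r" "path_shaped (row_supp A N) r s"
    and "\<And>c. c < N \<Longrightarrow> \<exists>\<rho><r. c \<in> row_supp A N \<rho>"
  shows "{F. \<exists>W. (F, W) \<in> Qpoly A r N} = fconvex_hull (Xi N ` kernel_code A r N)"
  using Qpoly_projection_subset_fconvex_hull[OF assms] fconvex_hull_Xi_subset_Qpoly_projection
  by blast

subsection \<open>The rows of \<open>F\<^sub>j\<close> form a path\<close>

definition Fmat_row_cols :: "nat \<Rightarrow> nat \<Rightarrow> nat set" where
  "Fmat_row_cols d \<rho> =
     (if \<rho> = 0 then {0, 1, d}
      else if \<rho> < d - 3 then {\<rho> + 1, d + \<rho> - 1, d + \<rho>}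
      else if \<rho> = d - 3 then {d - 2, d - 1, 2 * d - 4}
      else {})"

lemma mem_Fmat_row_cols:
  "x \<in> Fmat_row_cols d \<rho> \<longleftrightarrow>
     (if \<rho> = 0 then x = 0 \<or> x = 1 \<or> x = d
      else if \<rho> < d - 3 then x = \<rho> + 1 \<or> x = d + \<rho> - 1 \<or> x = d + \<rho>
      else \<rho> = d - 3 \<and> (x = d - 2 \<or> x = d - 1 \<or> x = 2 * d - 4))"
  by (auto simp: Fmat_row_cols_def)

lemma Fmat_nonzero_iff:
  fixes H :: "nat \<Rightarrow> nat \<Rightarrow> 'a::ring_1"
  assumes H: "\<And>k. k < d \<Longrightarrow> H j (idx k) \<noteq> 0" and "4 \<le> d"
  shows "Fmat H j idx d \<rho> c \<noteq> 0 \<longleftrightarrow> c \<in> Fmat_row_cols d \<rho>"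
proof -
  consider "\<rho> = 0" | "0 < \<rho>" "\<rho> < d - 3" | "\<rho> = d - 3" | "d - 3 < \<rho>"
    using \<open>4 \<le> d\<close> by linarith
  then show ?thesis
  proof cases
    case 1
    then have "Fmat H j idx d \<rho> c = (if c = 0 then H j (idx 0) else if c = 1 then H j (idx 1)
        else if c = d then 1 else 0)"
      by (simp add: Fmat_def)
    moreover have "d \<noteq> 0" "d \<noteq> 1" using \<open>4 \<le> d\<close> by auto
    ultimately show ?thesis using 1 H[of 0] H[of 1] \<open>4 \<le> d\<close> by (auto simp: Fmat_row_cols_def)
  next
    case 2
    then have "Fmat H j idx d \<rho> c = (if c = d + \<rho> - 1 then -1 else if c = \<rho> + 1 then H j (idx (\<rho> + 1))
        else if c = d + \<rho> then 1 else 0)"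
      by (simp add: Fmat_def)
    moreover have "d + \<rho> - 1 \<noteq> \<rho> + 1" "d + \<rho> - 1 \<noteq> d + \<rho>" "\<rho> + 1 \<noteq> d + \<rho>"
      using 2 by auto
    ultimately show ?thesis using 2 H[of "\<rho> + 1"] by (auto simp: Fmat_row_cols_def)
  next
    case 3
    then have "Fmat H j idx d \<rho> c = (if c = 2 * d - 4 then -1 else if c = d - 2 then H j (idx (d - 2))
        else if c = d - 1 then H j (idx (d - 1)) else 0)"
      using \<open>4 \<le> d\<close> by (simp add: Fmat_def)
    moreover have "2 * d - 4 \<noteq> d - 2" "2 * d - 4 \<noteq> d - 1" "d - 2 \<noteq> d - 1"
      using \<open>4 \<le> d\<close> by auto
    ultimately show ?thesis using 3 H[of "d - 2"] H[of "d - 1"] \<open>4 \<le> d\<close>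
      by (auto simp: Fmat_row_cols_def)
  next
    case 4
    then show ?thesis by (simp add: Fmat_def Fmat_row_cols_def)
  qed
qed

lemma row_supp_Fmat:
  fixes H :: "nat \<Rightarrow> nat \<Rightarrow> 'a::ring_1"
  assumes "\<And>k. k < d \<Longrightarrow> H j (idx k) \<noteq> 0" "4 \<le> d"
  shows "row_supp (Fmat H j idx d) (2 * d - 3) = Fmat_row_cols d"
proof
  fix \<rho>
  have "c < 2 * d - 3" if "c \<in> Fmat_row_cols d \<rho>" for c
    using that \<open>4 \<le> d\<close> by (auto simp: Fmat_row_cols_def split: if_splits)
  then show "row_supp (Fmat H j idx d) (2 * d - 3) \<rho> = Fmat_row_cols d \<rho>"
    using Fmat_nonzero_iff[where H = H and j = j and idx = idx, OF assms]
    unfolding row_supp_def by blast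
qed

lemma path_shaped_Fmat_row_cols:
  assumes "4 \<le> d"
  shows "path_shaped (Fmat_row_cols d) (d - 2) (\<lambda>k. d + k - 1)"
  unfolding path_shaped_def
proof (intro conjI allI impI)
  fix k assume "0 < k \<and> k < d - 2"
  then show "d + k - 1 \<in> Fmat_row_cols d (k - 1) \<inter> Fmat_row_cols d k"
    using assms by (auto simp: mem_Fmat_row_cols)
next
  fix \<rho> k assume \<rho>k: "\<rho> < k \<and> k < d - 2"
  have "x = d + k - 1" if "x \<in> Fmat_row_cols d \<rho>" "x \<in> Fmat_row_cols d k" for x
  proof -
    have "x \<le> \<rho> + 1 \<or> 0 < \<rho> \<and> x = d + \<rho> - 1 \<or> x = d + \<rho>"
      using that(1) \<rho>k by (simp add: mem_Fmat_row_cols split: if_splits) linarith+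
    moreover have "k + 1 \<le> x \<and> x < d \<or> x = d + k - 1 \<or> x = d + k"
      using that(2) \<rho>k assms by (simp add: mem_Fmat_row_cols split: if_splits) linarith+
    ultimately show ?thesis using \<rho>k by arith
  qed
  then show "Fmat_row_cols d \<rho> \<inter> Fmat_row_cols d k \<subseteq> {d + k - 1}" by blast
qed

lemma Fmat_row_cols_cover:
  assumes "4 \<le> d" "c < 2 * d - 3"
  shows "\<exists>\<rho><d - 2. c \<in> Fmat_row_cols d \<rho>"
proof -
  consider "c \<le> 1 \<or> c = d" | "2 \<le> c" "c \<le> d - 3" | "c = d - 2 \<or> c = d - 1" | "d < c"
    by linarith
  then show ?thesis
  proof cases
    case 1
    then show ?thesis using assms by (intro exI[of _ 0]) (auto simp: mem_Fmat_row_cols)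
  next
    case 2
    then show ?thesis using assms
      by (intro exI[of _ "c - 1"]) (auto simp: mem_Fmat_row_cols)
  next
    case 3
    then show ?thesis using assms by (intro exI[of _ "d - 3"]) (auto simp: mem_Fmat_row_cols)
  next
    case 4
    then show ?thesis using assms by (intro exI[of _ "c - d"]) (auto simp: mem_Fmat_row_cols)
  qed
qed

theorem corollary2:
  fixes H :: "nat \<Rightarrow> nat \<Rightarrow> 'a::{ring_1, finite}"
    and m n j d :: nat and idx :: "nat \<Rightarrow> nat"
  assumes "j < m"
    and "d = card {i. i < n \<and> H j i \<noteq> 0}"
    and "bij_betw idx {..<d} {i. i < n \<and> H j i \<noteq> 0}"
    and "d \<ge> 4"
  shows "{F. \<exists>W. (F, W) \<in> Qpoly (Fmat H j idx d) (d - 2) (2 * d - 3)} =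
         fconvex_hull (Xi (2 * d - 3) ` kernel_code (Fmat H j idx d) (d - 2) (2 * d - 3))"
proof -
  \<comment> \<open>Of the hypotheses on \<open>j\<close>, \<open>d\<close> and \<open>idx\<close> only the nonvanishing of the
    entries \<open>H j (idx k)\<close>, \<open>k < d\<close>, is needed.\<close>
  have "H j (idx k) \<noteq> 0" if "k < d" for k
    using bij_betw_apply[OF assms(3)] that by auto
  then have supp: "row_supp (Fmat H j idx d) (2 * d - 3) = Fmat_row_cols d"
    using \<open>d \<ge> 4\<close> by (rule row_supp_Fmat)
  show ?thesis
  proof (rule Qpoly_projection_eq_fconvex_hull)
    show "0 < d - 2"
      using \<open>d \<ge> 4\<close> by simp
    show "path_shaped (row_supp (Fmat H j idx d) (2 * d - 3)) (d - 2) (\<lambda>k. d + k - 1)"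
      unfolding supp using \<open>d \<ge> 4\<close> by (rule path_shaped_Fmat_row_cols)
    show "\<exists>\<rho><d - 2. c \<in> row_supp (Fmat H j idx d) (2 * d - 3) \<rho>" if "c < 2 * d - 3" for c
      unfolding supp using \<open>d \<ge> 4\<close> that by (rule Fmat_row_cols_cover)
  qed
qed

end
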